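(* For any $\alpha,\beta\in\mathbb C$ with $\mathrm{Re}(\alpha+\beta)>0$ and any $\lambda_1,\lambda_2,\mu_1,\mu_2\in\mathbb R$, $$\int_{\mathbb R^2}e^{-\alpha(\lambda_1+\lambda_2-\kappa_1-\kappa_2)-\beta(\mu_1+\mu_2-\kappa_1-\kappa_2)-e^{-(\lambda_1-\kappa_1)}-e^{-(\kappa_1-\lambda_2)}-e^{-(\lambda_2-\kappa_2)}-e^{-(\mu_1-\kappa_1)}-e^{-(\kappa_1-\mu_2)}-e^{-(\mu_2-\kappa_2)}}\,d\kappa_1d\kappa_2$$ $$=\int_{\mathbb R^2}e^{-\alpha(\pi_1+\pi_2-\mu_1-\mu_2)-\beta(\pi_1+\pi_2-\lambda_1-\lambda_2)-e^{-(\pi_1-\lambda_1)}-e^{-(\lambda_1-\pi_2)}-e^{-(\pi_2-\lambda_2)}-e^{-(\pi_1-\mu_1)}-e^{-(\mu_1-\pi_2)}-e^{-(\pi_2-\mu_2)}}\,d\pi_1d\pi_2,$$ and both integrals are finite (absolutely convergent). *)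

theory Defs
  imports "HOL-Analysis.Analysis"
begin

definition LHS_integrand :: "complex \<Rightarrow> complex \<Rightarrow> real \<Rightarrow> real \<Rightarrow> real \<Rightarrow> real \<Rightarrow> real \<times> real \<Rightarrow> complex" where
  "LHS_integrand \<alpha> \<beta> l1 l2 m1 m2 = (\<lambda>(k1, k2).
     exp (- \<alpha> * complex_of_real (l1 + l2 - k1 - k2) - \<beta> * complex_of_real (m1 + m2 - k1 - k2)
          - complex_of_real (exp (-(l1 - k1)) + exp (-(k1 - l2)) + exp (-(l2 - k2))
                             + exp (-(m1 - k1)) + exp (-(k1 - m2)) + exp (-(m2 - k2)))))"

definition RHS_integrand :: "complex \<Rightarrow> complex \<Rightarrow> real \<Rightarrow> real \<Rightarrow> real \<Rightarrow> real \<Rightarrow> real \<times> real \<Rightarrow> complex" where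
  "RHS_integrand \<alpha> \<beta> l1 l2 m1 m2 = (\<lambda>(p1, p2).
     exp (- \<alpha> * complex_of_real (p1 + p2 - m1 - m2) - \<beta> * complex_of_real (p1 + p2 - l1 - l2)
          - complex_of_real (exp (-(p1 - l1)) + exp (-(l1 - p2)) + exp (-(p2 - l2))
                             + exp (-(p1 - m1)) + exp (-(m1 - p2)) + exp (-(p2 - m2)))))"

end

theory Submission
  imports Defs
begin

text \<open>
  The affine map \<open>(\<kappa>\<^sub>1, \<kappa>\<^sub>2) \<mapsto> (a - \<kappa>\<^sub>2, b - \<kappa>\<^sub>1)\<close> with
  \<open>exp a = (exp \<lambda>\<^sub>1 + exp \<mu>\<^sub>1) / (exp (-\<lambda>\<^sub>2) + exp (-\<mu>\<^sub>2))\<close> and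
  \<open>exp b = (exp \<lambda>\<^sub>2 + exp \<mu>\<^sub>2) / (exp (-\<lambda>\<^sub>1) + exp (-\<mu>\<^sub>1))\<close> preserves
  Lebesgue measure on the plane and pulls the right-hand integrand back to the left-hand one:
  it maps the three pairs of exponential terms onto each other, and
  \<open>a + b = \<lambda>\<^sub>1 + \<lambda>\<^sub>2 + \<mu>\<^sub>1 + \<mu>\<^sub>2\<close> matches the linear parts.
  Absolute convergence of the left-hand integral follows by dominating its modulus with a
  product of one-dimensional integrands \<open>exp (s x - c exp x)\<close>, where \<open>s = Re (\<alpha> + \<beta>) > 0\<close>.
\<close>

lemma (in pair_sigma_finite) integrable_product:
  fixes f g :: "_ \<Rightarrow> real"
  assumes f: "integrable M1 f" and g: "integrable M2 g"
  shows "integrable (M1 \<Otimes>\<^sub>M M2) (\<lambda>(x, y). f x * g y)"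
proof (rule Fubini_integrable)
  show "(\<lambda>(x, y). f x * g y) \<in> borel_measurable (M1 \<Otimes>\<^sub>M M2)"
    using f g by measurable
  show "integrable M1 (\<lambda>x. \<integral>y. norm ((\<lambda>(x, y). f x * g y) (x, y)) \<partial>M2)"
    using f by (simp add: abs_mult integrable_abs)
  show "AE x in M1. integrable M2 (\<lambda>y. (\<lambda>(x, y). f x * g y) (x, y))"
    using g by simp
qed

lemma integrable_integral_measure_preserving:
  fixes f g :: "'a \<Rightarrow> 'b::{banach, second_countable_topology}"
  assumes T: "T \<in> measurable M M" and preserving: "distr M M T = M"
    and g: "g \<in> borel_measurable M" and pullback: "\<And>x. x \<in> space M \<Longrightarrow> g (T x) = f x"
    and f: "integrable M f"
  shows "integrable M g \<and> integral\<^sup>L M g = integral\<^sup>L M f"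
proof
  have "integrable M (\<lambda>x. g (T x))"
    using f by (subst Bochner_Integration.integrable_cong[OF refl pullback])
  then show "integrable M g"
    using integrable_distr_eq[OF T g] by (simp add: preserving)
  have "integral\<^sup>L M (\<lambda>x. g (T x)) = integral\<^sup>L M f"
    using pullback by (rule Bochner_Integration.integral_cong[OF refl])
  then show "integral\<^sup>L M g = integral\<^sup>L M f"
    using integral_distr[OF T g] by (simp add: preserving)
qed

lemma lborel_distr_reflect: "distr lborel borel (\<lambda>x. a - x) = (lborel :: real measure)"
  by (subst lborel_real_affine[of "-1" a]) (auto simp: density_1 one_ennreal_def[symmetric])

lemma lborel_pair_distr_reflect_swap:
  fixes a b :: real
  shows "distr (lborel \<Otimes>\<^sub>M lborel) (lborel \<Otimes>\<^sub>M lborel) (\<lambda>(x, y). (a - y, b - x))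
    = lborel \<Otimes>\<^sub>M lborel"
proof -
  have reflect: "distr (lborel \<Otimes>\<^sub>M lborel) (lborel \<Otimes>\<^sub>M lborel) (\<lambda>(x, y). (a - x, b - y))
      = lborel \<Otimes>\<^sub>M (lborel :: real measure)"
  proof -
    have "distr (lborel \<Otimes>\<^sub>M lborel) (lborel \<Otimes>\<^sub>M lborel) (\<lambda>(x, y). (a - x, b - y))
        = distr (lborel \<Otimes>\<^sub>M lborel) (borel \<Otimes>\<^sub>M borel) (\<lambda>(x::real, y::real). (a - x, b - y))"
      by (rule distr_cong) (auto intro!: sets_pair_measure_cong)
    also have "\<dots> = distr lborel borel (\<lambda>x. a - x) \<Otimes>\<^sub>M distr lborel borel (\<lambda>y. b - y)"
      by (rule pair_measure_distr[symmetric])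
        (auto simp: lborel_distr_reflect intro: lborel.sigma_finite_measure_axioms)
    finally show ?thesis
      by (simp add: lborel_distr_reflect)
  qed
  have "distr (lborel \<Otimes>\<^sub>M lborel) (lborel \<Otimes>\<^sub>M lborel) (\<lambda>(x, y). (a - y, b - x))
      = distr (distr (lborel \<Otimes>\<^sub>M lborel) (lborel \<Otimes>\<^sub>M lborel) (\<lambda>(x, y). (y, x)))
          (lborel \<Otimes>\<^sub>M lborel) (\<lambda>(x::real, y::real). (a - x, b - y))"
    by (subst distr_distr) (auto simp: comp_def case_prod_unfold)
  also have "\<dots> = lborel \<Otimes>\<^sub>M lborel"
    by (simp add: lborel_pair.distr_pair_swap[symmetric] reflect)
  finally show ?thesis .
qed

lemma lborel_integrable_exp_halflines:
  fixes a :: real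
  assumes "a > 0"
  shows "integrable lborel (\<lambda>x. indicator {0..} x * exp (- a * x))"
    and "integrable lborel (\<lambda>x. indicator {..0} x * exp (a * x))"
proof -
  have "integrable lebesgue (\<lambda>x. indicat_real {0..} x *\<^sub>R exp (- a * x))"
    using assms by (intro nonnegative_absolutely_integrable_1[unfolded set_integrable_def]
        integrable_on_exp_minus_to_infinity) auto
  then show decay: "integrable lborel (\<lambda>x. indicator {0..} x * exp (- a * x))"
    by (simp add: integrable_completion)
  have "integrable lborel (\<lambda>x. indicator {0..} (- x) * exp (- a * - x))"
    using lborel_integrable_real_affine[OF decay, of "-1" 0] by simp
  then show "integrable lborel (\<lambda>x. indicator {..0} x * exp (a * x))"
    by (simp add: indicator_def if_distrib cong: if_cong)
qed

lemma lborel_integrable_exp_linear_minus_exp: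
  fixes s c :: real
  assumes s: "s > 0" and c: "c > 0"
  shows "integrable lborel (\<lambda>x. exp (s * x - c * exp x))"
proof (rule Bochner_Integration.integrable_bound[OF _ _ AE_I2])
  define L where "L = (s + 1)\<^sup>2 / c"
  show "integrable lborel
      (\<lambda>x. exp L * (indicator {0..} x * exp (- x)) + indicator {..0} x * exp (s * x))"
    using lborel_integrable_exp_halflines[of 1] lborel_integrable_exp_halflines(2)[OF s] by auto
  show "(\<lambda>x. exp (s * x - c * exp x)) \<in> borel_measurable lborel"
    by measurable
  fix x :: real
  show "norm (exp (s * x - c * exp x))
      \<le> norm (exp L * (indicator {0..} x * exp (- x)) + indicator {..0} x * exp (s * x))"
  proof (cases "x \<ge> 0")
    case True
    \<comment> \<open>\<open>exp x \<ge> x\<^sup>2/4\<close> bounds \<open>(s + 1) x - c exp x\<close> by a concave quadratic with maximum \<open>L\<close>\<close>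
    have "x / 2 \<le> exp (x / 2)"
      using exp_ge_add_one_self[of "x / 2"] by linarith
    then have "(x / 2)\<^sup>2 \<le> (exp (x / 2))\<^sup>2"
      using True by (intro power_mono) auto
    then have "c * (x\<^sup>2 / 4) \<le> c * exp x"
      using c by (simp add: power2_eq_square power_divide flip: exp_add)
    moreover have "(s + 1) * x - c * (x\<^sup>2 / 4) \<le> L"
      using c sum_power2_ge_zero[of "c * x / 2 - (s + 1)" 0]
      by (simp add: L_def field_simps power2_eq_square)
    ultimately have "exp (s * x - c * exp x) \<le> exp L * exp (- x)"
      by (simp add: algebra_simps flip: exp_add)
    then show ?thesis
      using True by (simp add: add_increasing2)
  next
    case False
    then show ?thesis
      using c by (simp add: indicator_def)
  qed
qed

lemma exp_diff_add_exp_diff_right: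
  fixes u v p :: real
  shows "exp (u - p) + exp (v - p) = (exp u + exp v) / exp p"
  by (simp add: exp_diff add_divide_distrib)

lemma exp_diff_add_exp_diff_left:
  fixes u v p :: real
  shows "exp (p - u) + exp (p - v) = exp p * (exp (- u) + exp (- v))"
  by (simp add: distrib_left flip: exp_add)

lemma integrable_LHS_integrand:
  fixes \<alpha> \<beta> :: complex and l1 l2 m1 m2 :: real
  assumes "Re (\<alpha> + \<beta>) > 0"
  shows "integrable (lborel \<Otimes>\<^sub>M lborel) (LHS_integrand \<alpha> \<beta> l1 l2 m1 m2)"
proof -
  define s where "s = Re (\<alpha> + \<beta>)"
  define A where "A = exp (- l1) + exp (- m1)"
  define C where "C = exp (- l2) + exp (- m2)"
  define K where "K = exp (- Re \<alpha> * (l1 + l2) - Re \<beta> * (m1 + m2))"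
  define bound
    where "bound = (\<lambda>(x, y). (K * exp (s * x - A * exp x)) * exp (s * y - C * exp y))"
  have "s > 0" "A > 0" "C > 0"
    using assms by (simp_all add: s_def A_def C_def add_pos_pos)
  then have "integrable (lborel \<Otimes>\<^sub>M lborel) bound"
    unfolding bound_def
    by (intro lborel_pair.integrable_product lborel_integrable_exp_linear_minus_exp
        integrable_mult_right)
  moreover have "LHS_integrand \<alpha> \<beta> l1 l2 m1 m2 \<in> borel_measurable (lborel \<Otimes>\<^sub>M lborel)"
    unfolding LHS_integrand_def by measurable
  moreover have "norm (LHS_integrand \<alpha> \<beta> l1 l2 m1 m2 (k1, k2)) \<le> norm (bound (k1, k2))" for k1 k2
  proof -
    have "A * exp k1 = exp (- (l1 - k1)) + exp (- (m1 - k1))"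
      "C * exp k2 = exp (- (l2 - k2)) + exp (- (m2 - k2))"
      by (simp_all add: A_def C_def exp_diff_add_exp_diff_left mult.commute)
    then have sum_exp: "A * exp k1 + C * exp k2
        \<le> exp (- (l1 - k1)) + exp (- (k1 - l2)) + exp (- (l2 - k2))
          + exp (- (m1 - k1)) + exp (- (k1 - m2)) + exp (- (m2 - k2))"
      using exp_gt_zero[of "- (k1 - l2)"] exp_gt_zero[of "- (k1 - m2)"] by linarith
    have "norm (LHS_integrand \<alpha> \<beta> l1 l2 m1 m2 (k1, k2))
        = exp (- Re \<alpha> * (l1 + l2 - k1 - k2) - Re \<beta> * (m1 + m2 - k1 - k2)
          - (exp (- (l1 - k1)) + exp (- (k1 - l2)) + exp (- (l2 - k2))
            + exp (- (m1 - k1)) + exp (- (k1 - m2)) + exp (- (m2 - k2))))"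
      by (simp add: LHS_integrand_def)
    also have "\<dots> \<le> exp (- Re \<alpha> * (l1 + l2) - Re \<beta> * (m1 + m2)
        + (s * k1 - A * exp k1) + (s * k2 - C * exp k2))"
      using sum_exp by (simp add: s_def algebra_simps)
    also have "\<dots> = norm (bound (k1, k2))"
      by (simp add: bound_def K_def exp_add)
    finally show ?thesis .
  qed
  ultimately show ?thesis
    by (metis (no_types) Bochner_Integration.integrable_bound[OF _ _ AE_I2] prod.collapse)
qed

lemma RHS_integrand_reflect_swap:
  fixes \<alpha> \<beta> :: complex and l1 l2 m1 m2 :: real
  obtains a b where
    "\<And>k1 k2. RHS_integrand \<alpha> \<beta> l1 l2 m1 m2 (a - k2, b - k1)
      = LHS_integrand \<alpha> \<beta> l1 l2 m1 m2 (k1, k2)"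
proof -
  define A where "A = exp (- l1) + exp (- m1)"
  define B where "B = exp l2 + exp m2"
  define C where "C = exp (- l2) + exp (- m2)"
  define D where "D = exp l1 + exp m1"
  have pos: "A > 0" "B > 0" "C > 0" "D > 0"
    by (simp_all add: A_def B_def C_def D_def add_pos_pos)
  have DA: "D = A * exp (l1 + m1)" and CB: "C = B * exp (- (l2 + m2))"
    by (simp_all add: A_def B_def C_def D_def distrib_right flip: exp_add)
  have "RHS_integrand \<alpha> \<beta> l1 l2 m1 m2 (ln D - ln C - k2, ln B - ln A - k1)
      = LHS_integrand \<alpha> \<beta> l1 l2 m1 m2 (k1, k2)" for k1 k2
  proof -
    define p1 where "p1 = ln D - ln C - k2"
    define p2 where "p2 = ln B - ln A - k1"
    have "exp p1 = D / (C * exp k2)" "exp p2 = B / (A * exp k1)"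
      using pos by (simp_all add: p1_def p2_def exp_diff)
    then have "exp (- (p1 - l1)) + exp (- (p1 - m1)) = exp (- (l2 - k2)) + exp (- (m2 - k2))"
      "exp (- (l1 - p2)) + exp (- (m1 - p2)) = exp (- (k1 - l2)) + exp (- (k1 - m2))"
      "exp (- (p2 - l2)) + exp (- (p2 - m2)) = exp (- (l1 - k1)) + exp (- (m1 - k1))"
      using pos by (simp_all add: exp_diff_add_exp_diff_right exp_diff_add_exp_diff_left
          flip: A_def B_def C_def D_def)
    then have sum_exp: "exp (- (p1 - l1)) + exp (- (l1 - p2)) + exp (- (p2 - l2))
          + exp (- (p1 - m1)) + exp (- (m1 - p2)) + exp (- (p2 - m2))
        = exp (- (l1 - k1)) + exp (- (k1 - l2)) + exp (- (l2 - k2))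
          + exp (- (m1 - k1)) + exp (- (k1 - m2)) + exp (- (m2 - k2))"
      by linarith
    have "p1 + p2 = l1 + l2 + m1 + m2 - k1 - k2"
      using pos by (simp add: p1_def p2_def DA CB ln_mult)
    then have "p1 + p2 - m1 - m2 = l1 + l2 - k1 - k2" "p1 + p2 - l1 - l2 = m1 + m2 - k1 - k2"
      by linarith+
    then show ?thesis
      unfolding RHS_integrand_def LHS_integrand_def p1_def[symmetric] p2_def[symmetric]
      by (simp only: case_prod_conv sum_exp)
  qed
  then show thesis
    by (rule that)
qed

theorem lemma3p5:
  fixes \<alpha> \<beta> :: complex and l1 l2 m1 m2 :: real
  assumes "Re (\<alpha> + \<beta>) > 0"
  shows "integrable (lborel \<Otimes>\<^sub>M lborel) (LHS_integrand \<alpha> \<beta> l1 l2 m1 m2)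
    \<and> integrable (lborel \<Otimes>\<^sub>M lborel) (RHS_integrand \<alpha> \<beta> l1 l2 m1 m2)
    \<and> (\<integral>x. LHS_integrand \<alpha> \<beta> l1 l2 m1 m2 x \<partial>(lborel \<Otimes>\<^sub>M lborel))
       = (\<integral>x. RHS_integrand \<alpha> \<beta> l1 l2 m1 m2 x \<partial>(lborel \<Otimes>\<^sub>M lborel))"
proof -
  let ?M = "lborel \<Otimes>\<^sub>M lborel :: (real \<times> real) measure"
  obtain a b where pullback:
    "\<And>k1 k2. RHS_integrand \<alpha> \<beta> l1 l2 m1 m2 (a - k2, b - k1)
      = LHS_integrand \<alpha> \<beta> l1 l2 m1 m2 (k1, k2)"
    using RHS_integrand_reflect_swap by blast
  have LHS: "integrable ?M (LHS_integrand \<alpha> \<beta> l1 l2 m1 m2)"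
    using assms by (rule integrable_LHS_integrand)
  have "(\<lambda>(x, y). (a - y, b - x)) \<in> measurable ?M ?M"
    by measurable
  moreover have "RHS_integrand \<alpha> \<beta> l1 l2 m1 m2 \<in> borel_measurable ?M"
    unfolding RHS_integrand_def by measurable
  moreover have "RHS_integrand \<alpha> \<beta> l1 l2 m1 m2 ((\<lambda>(x, y). (a - y, b - x)) z)
      = LHS_integrand \<alpha> \<beta> l1 l2 m1 m2 z" for z
    by (cases z) (simp add: pullback)
  ultimately have "integrable ?M (RHS_integrand \<alpha> \<beta> l1 l2 m1 m2)
      \<and> integral\<^sup>L ?M (RHS_integrand \<alpha> \<beta> l1 l2 m1 m2)
        = integral\<^sup>L ?M (LHS_integrand \<alpha> \<beta> l1 l2 m1 m2)"
    using lborel_pair_distr_reflect_swap LHS by (intro integrable_integral_measure_preserving) auto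
  with LHS show ?thesis
    by simp
qed

end
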